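(* Let $H$ be a digraph with at least two vertices and $r\in V(H)$ such that every vertex of $H$ is reachable from $r$, and let $(\hat T,\{B_x\}_{x\in V(\hat T)})$ be the $r$-rooted cut decomposition of $H$. Let $x\in V(\hat T)$, let $\hat P=x_0x_1\dots x_\ell$ be the path in $\hat T$ from $r=x_0$ to $x=x_\ell$, and let $F_0,\dots,F_\ell$ be the fins of $\hat P$. Let $P$ be a directed path in $H$ from $r$ to a vertex $v\in B_x$. Then for every $0\le i<\ell$, $P$ visits $x_i$ before $x_{i+1}$, and the vertices of the subpath $P[x_i,x_{i+1}]$ other than $x_{i+1}$ are all contained in $\bigcup_{y\in F_i}B_y$.
   Context: Digraphs are finite and without loops; paths are directed. For a path $P$ and vertices $a,b$ on it with $a$ before $b$, $P[a,b]$ is the subpath from $a$ to $b$. A vertex $v$ is bi-reachable from $r$ if there are two internally vertex-disjoint directed paths from $r$ to $v$. For a digraph $H$ with at least two vertices and $r\in V(H)$ such that every vertex of $H$ is reachable from $r$, the diblock $B_r$ of $r$ in $H$ is the set of all vertices bi-reachable from $r$, together with $r$ and all out-neighbours of $r$. For $x\in B_r\setminus\{r\}$ let $X_x$ be the set of vertices $v\in V(H)\setminus B_r$ such that every directed $r$–$v$ path intersects $B_r$ for the last time in $x$; $x$ is a bottleneck of $B_r$ if $X_x\ne\emptyset$ (the sets $X_x$ partition $V(H)\setminus B_r$). The $r$-rooted cut decomposition $(\hat T,\{B_x\}_{x\in V(\hat T)})$ of $H$ is defined recursively: $\hat T$ is a rooted tree with root $r$ and $V(\hat T)\subseteq V(H)$;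 the set associated with the root is $B_r$; the children of $r$ are the bottlenecks of $B_r$; and for each bottleneck $x$, the subtree of $\hat T$ rooted at $x$ together with its associated sets is the $x$-rooted cut decomposition of the induced subgraph $H[X_x\cup\{x\}]$. For a node $x$, $\hat T_x$ is the subtree of $\hat T$ rooted at $x$. For a path $x_0x_1\dots x_\ell$ in $\hat T$ from the root $x_0$, its fins are $F_{i}=V(\hat T_{x_i})\setminus V(\hat T_{x_{i+1}})$ for $0\le i<\ell$ and $F_\ell=V(\hat T_{x_\ell})$. *)

theory Defs
  imports Main "HOL-Library.Sublist"
begin

definition dpath :: "'a set \<Rightarrow> 'a rel \<Rightarrow> 'a list \<Rightarrow> bool" where
  "dpath W E P \<longleftrightarrow> P \<noteq> [] \<and> distinct P \<and> set P \<subseteq> W \<and>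
     (\<forall>i. Suc i < length P \<longrightarrow> (P ! i, P ! Suc i) \<in> E)"

definition bireach :: "'a set \<Rightarrow> 'a rel \<Rightarrow> 'a \<Rightarrow> 'a \<Rightarrow> bool" where
  "bireach W E r v \<longleftrightarrow> (\<exists>P Q. dpath W E P \<and> dpath W E Q \<and>
     hd P = r \<and> last P = v \<and> hd Q = r \<and> last Q = v \<and>
     set P \<inter> set Q \<subseteq> {r, v})"

definition diblock :: "'a set \<Rightarrow> 'a rel \<Rightarrow> 'a \<Rightarrow> 'a set" where
  "diblock W E r = {v \<in> W. bireach W E r v} \<union> {r} \<union> {v \<in> W. (r, v) \<in> E}"

definition Xset :: "'a set \<Rightarrow> 'a rel \<Rightarrow> 'a \<Rightarrow> 'a \<Rightarrow> 'a set" where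
  "Xset W E r x = {v \<in> W - diblock W E r. \<forall>P. dpath W E P \<and> hd P = r \<and> last P = v \<longrightarrow>
      last (filter (\<lambda>u. u \<in> diblock W E r) P) = x}"

definition bottleneck :: "'a set \<Rightarrow> 'a rel \<Rightarrow> 'a \<Rightarrow> 'a \<Rightarrow> bool" where
  "bottleneck W E r x \<longleftrightarrow> x \<in> diblock W E r - {r} \<and> Xset W E r x \<noteq> {}"

text \<open>The r-rooted cut decomposition of (V,E): a node of the tree is identified with
  its root path [x_0,...,x_l] in the tree; the second argument is the vertex set W
  of the subgraph H[W] whose x_l-rooted cut decomposition is the subtree at x_l.\<close>
inductive cdnode :: "'a set \<Rightarrow> 'a rel \<Rightarrow> 'a \<Rightarrow> 'a list \<Rightarrow> 'a set \<Rightarrow> bool"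
  for V E r where
  root: "cdnode V E r [r] V"
| child: "cdnode V E r p W \<Longrightarrow> bottleneck W E (last p) x \<Longrightarrow>
          cdnode V E r (p @ [x]) (Xset W E (last p) x \<union> {x})"

definition cdbag :: "'a set \<Rightarrow> 'a rel \<Rightarrow> 'a \<Rightarrow> 'a list \<Rightarrow> 'a set" where
  "cdbag V E r q = {v. \<exists>W. cdnode V E r q W \<and> v \<in> diblock W E (last q)}"

text \<open>Union of the bags over the i-th fin F_i of the tree path p = x_0 ... x_l (i < l):
  nodes in the subtree of x_i but not in the subtree of x_{i+1}.\<close>
definition finbags :: "'a set \<Rightarrow> 'a rel \<Rightarrow> 'a \<Rightarrow> 'a list \<Rightarrow> nat \<Rightarrow> 'a set" where
  "finbags V E r p i = \<Union> {cdbag V E r q | q. (\<exists>W. cdnode V E r q W) \<and>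
      prefix (take (Suc i) p) q \<and> \<not> prefix (take (Suc (Suc i)) p) q}"

end

theory Submission
  imports Defs
begin

text \<open>Every path from the root x of a diblock to a vertex
  u outside it leaves the diblock at the same bottleneck: otherwise Menger's theorem yields
  a cut vertex separating u from x, and truncating both paths there gives a shorter pair
  with different exits.  Hence the part of P after x_i, which runs inside the subgraph of
  x_i into the branch of x_(i+1), passes through x_(i+1); before that it only meets the
  diblock of x_i and the other branches X_y, whose vertices all lie in bags of subtrees at
  children y different from x_(i+1), i.e. in bags of the fin F_i.\<close>

section \<open>Directed paths\<close>

lemma dpath_iff_successively:
  "dpath W E P \<longleftrightarrow> P \<noteq> [] \<and> distinct P \<and> set P \<subseteq> W \<and> successively (\<lambda>a b. (a, b) \<in> E) P"
  by (auto simp: dpath_def successively_conv_nth)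

lemma dpath_singleton: "w \<in> W \<Longrightarrow> dpath W E [w]"
  by (simp add: dpath_iff_successively)

lemma dpath_append:
  "xs \<noteq> [] \<Longrightarrow> ys \<noteq> [] \<Longrightarrow> dpath W E (xs @ ys) \<longleftrightarrow>
     dpath W E xs \<and> dpath W E ys \<and> set xs \<inter> set ys = {} \<and> (last xs, hd ys) \<in> E"
  by (auto simp: dpath_iff_successively successively_append_iff)

lemma dpath_appendD1: "dpath W E (xs @ ys) \<Longrightarrow> xs \<noteq> [] \<Longrightarrow> dpath W E xs"
  by (cases "ys = []") (auto simp: dpath_append)

lemma dpath_appendD2: "dpath W E (xs @ ys) \<Longrightarrow> ys \<noteq> [] \<Longrightarrow> dpath W E ys"
  by (cases "xs = []") (auto simp: dpath_append)

lemma dpath_appendD_middle: "dpath W E (xs @ ys @ zs) \<Longrightarrow> ys \<noteq> [] \<Longrightarrow> dpath W E ys"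
  by (metis dpath_appendD1 dpath_appendD2 append_is_Nil_conv)

lemma dpath_Cons:
  "dpath W E (x # xs) \<longleftrightarrow> x \<in> W \<and> (xs = [] \<or> dpath W E xs \<and> x \<notin> set xs \<and> (x, hd xs) \<in> E)"
  using dpath_append[of "[x]" xs W E] by (auto simp: dpath_iff_successively)

lemma dpath_mono: "dpath W E P \<Longrightarrow> set P \<subseteq> W' \<Longrightarrow> dpath W' E P"
  by (auto simp: dpath_iff_successively)

lemma dpath_hd_in: "dpath W E P \<Longrightarrow> hd P \<in> set P"
  and dpath_last_in: "dpath W E P \<Longrightarrow> last P \<in> set P"
  by (simp_all add: dpath_iff_successively)

lemma dpath_join:
  assumes "dpath W E xs" "dpath W E ys" "last xs = hd ys" "set xs \<inter> set ys \<subseteq> {hd ys}"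
  shows "dpath W E (xs @ tl ys)" "last (xs @ tl ys) = last ys"
proof -
  obtain y ys' where ys: "ys = y # ys'" using assms(2) by (cases ys) (auto simp: dpath_def)
  have "xs \<noteq> []" using assms(1) by (simp add: dpath_def)
  then show "dpath W E (xs @ tl ys)"
    using assms ys by (cases "ys' = []") (auto simp: dpath_append dpath_Cons)
  show "last (xs @ tl ys) = last ys" using assms(3) ys by simp
qed

lemma walk_to_path:
  assumes "xs \<noteq> []" "set xs \<subseteq> W" "successively (\<lambda>a b. (a, b) \<in> E) xs"
  shows "\<exists>P. dpath W E P \<and> hd P = hd xs \<and> last P = last xs \<and> set P \<subseteq> set xs"
  using assms
proof (induction "length xs" arbitrary: xs rule: less_induct)
  case less
  show ?case
  proof (cases "distinct xs")
    case True
    then show ?thesis using less.prems by (auto simp: dpath_iff_successively)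
  next
    case False
    then obtain a b c y where xs: "xs = a @ [y] @ b @ [y] @ c"
      using not_distinct_decomp by blast
    let ?ys = "a @ [y] @ c"
    have "successively (\<lambda>a b. (a, b) \<in> E) ?ys"
      using less.prems(3) unfolding xs
      by (auto simp: successively_append_iff successively_Cons)
    moreover have "length ?ys < length xs" "set ?ys \<subseteq> W" using xs less.prems by auto
    ultimately obtain P where "dpath W E P" "hd P = hd ?ys" "last P = last ?ys" "set P \<subseteq> set ?ys"
      using less.hyps by blast
    moreover have "hd ?ys = hd xs" "last ?ys = last xs" "set ?ys \<subseteq> set xs"
      using xs by (cases a; cases c rule: rev_cases; auto)+
    ultimately show ?thesis by (metis order.trans)
  qed
qed


section \<open>Two internally disjoint paths\<close>

text \<open>The invariant of the augmenting-path proof of Menger's theorem: a path bypassing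
  q = hd R lets the meeting point of A and B advance along R towards z.\<close>

definition twin_paths :: "'a set \<Rightarrow> 'a rel \<Rightarrow> 'a \<Rightarrow> 'a list \<Rightarrow> 'a list \<Rightarrow> 'a list \<Rightarrow> 'a \<Rightarrow> bool"
  where "twin_paths W E x A B R z \<longleftrightarrow>
    dpath W E A \<and> dpath W E B \<and> dpath W E R \<and> hd A = x \<and> hd B = x \<and>
    last A = hd R \<and> last B = hd R \<and> last R = z \<and> hd R \<noteq> x \<and>
    set A \<inter> set B = {x, hd R} \<and> (set A \<union> set B) \<inter> set R = {hd R}"

lemma twin_paths_swap: "twin_paths W E x A B R z \<Longrightarrow> twin_paths W E x B A R z"
  unfolding twin_paths_def by (simp add: Int_commute Un_commute)

lemma twin_paths_bireach: "twin_paths W E x A B R z \<Longrightarrow> hd R = z \<Longrightarrow> bireach W E x z"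
  unfolding bireach_def by (rule exI[of _ A], rule exI[of _ B]) (simp add: twin_paths_def)

lemma twin_paths_bridge:
  assumes tw: "twin_paths W E x A B R z"
    and Q: "dpath W E Q" "hd Q = x" "last Q = z" "hd R \<notin> set Q"
  shows "\<exists>t Br f. t \<in> set A \<union> set B \<and> t \<noteq> hd R \<and> f \<in> set (tl R) \<and>
           dpath W E (t # Br @ [f]) \<and> set Br \<inter> (set A \<union> set B \<union> set R) = {}"
proof -
  note tw' = tw[unfolded twin_paths_def]
  obtain q Rt where R: "R = q # Rt" using tw' by (cases R) (auto simp: dpath_def)
  have xA: "x \<in> set A" using tw' dpath_hd_in by metis
  have zQ: "z \<in> set Q" using Q dpath_last_in by metis
  then have "Rt \<noteq> []" using Q(4) tw' R by auto
  then have "z \<in> set Rt" using tw' R last_in_set by fastforce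
  then obtain Q1 f Q2 where Qf: "Q = Q1 @ f # Q2" "f \<in> set Rt" "\<forall>w\<in>set Q1. w \<notin> set Rt"
    using split_list_first_prop[of Q "\<lambda>w. w \<in> set Rt"] zQ by blast
  have "x \<notin> set R"
    using tw' xA by (metis IntI UnI1 singletonD)
  then have "x \<notin> set Rt" using R by simp
  then have "x \<in> set Q1" using Q(2) Qf(1,2) by (cases Q1) auto
  then obtain Q3 t Br where Qt: "Q1 = Q3 @ t # Br" "t \<in> set A \<union> set B" "\<forall>w\<in>set Br. w \<notin> set A \<union> set B"
    using split_list_last_prop[of Q1 "\<lambda>w. w \<in> set A \<union> set B"] xA by blast
  have "Q = Q3 @ (t # Br @ [f]) @ Q2" using Qf(1) Qt(1) by simp
  then have "dpath W E (t # Br @ [f])"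
    using Q(1) dpath_appendD_middle by blast
  moreover have "set Br \<inter> (set A \<union> set B \<union> set R) = {}" "t \<noteq> hd R"
    using Qf Qt Q(4) R by auto
  ultimately show ?thesis using Qf(2) Qt(2) R by auto
qed

lemma twin_paths_step:
  assumes tw: "twin_paths W E x A B R z"
    and t: "t \<in> set A" "t \<noteq> hd R" and f: "f \<in> set (tl R)"
    and br: "dpath W E (t # Br @ [f])" "set Br \<inter> (set A \<union> set B \<union> set R) = {}"
  shows "\<exists>A' B' R'. twin_paths W E x A' B' R' z \<and> length R' < length R"
proof -
  have dA: "dpath W E A" and dB: "dpath W E B" and dR: "dpath W E R"
    and hA: "hd A = x" and hB: "hd B = x" and lA: "last A = hd R" and lB: "last B = hd R"
    and lR: "last R = z" and AB: "set A \<inter> set B = {x, hd R}"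
    and ABR: "(set A \<union> set B) \<inter> set R = {hd R}"
    using tw by (simp_all add: twin_paths_def)
  obtain q Rt where R: "R = q # Rt" using dR by (cases R) (auto simp: dpath_def)
  obtain A1 A2 where A: "A = A1 @ t # A2" using t(1) split_list by metis
  obtain R1 R2 where Rt: "Rt = R1 @ f # R2" using f R split_list by fastforce
  have distA: "distinct A" and distR: "distinct (q # R1 @ f # R2)"
    using dA dR R Rt by (auto simp: dpath_def)
  have "q \<in> set A2"
    using lA A R t(2) by (cases A2 rule: rev_cases) auto
  then have qA1: "q \<notin> set A1" using distA A by auto
  have xA1: "x \<in> set (A1 @ [t])" using hA A by (cases A1) auto
  have xB: "x \<in> set B" using hB dB dpath_hd_in by metis
  have AB': "w = x \<or> w = q" if "w \<in> set A" "w \<in> set B" for w using AB R that by auto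
  have ABR': "w = q" if "w \<in> set A \<union> set B" "w \<in> set R" for w using ABR R that by auto
  have fAB: "f \<notin> set A \<union> set B" using ABR' R Rt distR by auto
  define A' where "A' = B @ tl (q # R1 @ [f])"
  define B' where "B' = (A1 @ [t]) @ tl (t # Br @ [f])"
  have "dpath W E (q # R1 @ [f])"
    using dR R Rt dpath_appendD1[of W E "q # R1 @ [f]" R2] by simp
  moreover have "set B \<inter> set (q # R1 @ [f]) \<subseteq> {hd (q # R1 @ [f])}" using ABR R Rt by auto
  moreover have "last B = hd (q # R1 @ [f])" using lB R by simp
  ultimately have A': "dpath W E A'" "last A' = f"
    using dpath_join(1)[OF dB] unfolding A'_def by (blast, simp)
  have "dpath W E (A1 @ [t])"
    using dA A dpath_appendD1[of W E "A1 @ [t]" A2] by simp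
  moreover have "set (A1 @ [t]) \<inter> set (t # Br @ [f]) \<subseteq> {hd (t # Br @ [f])}"
    using A br(2) fAB by auto
  moreover have "last (A1 @ [t]) = hd (t # Br @ [f])" by simp
  ultimately have B': "dpath W E B'" "last B' = f"
    using dpath_join(1)[OF _ br(1)] unfolding B'_def by (blast, simp)
  have R': "dpath W E (f # R2)" "last (f # R2) = z"
    using dR lR R Rt dpath_appendD2[of W E "q # R1" "f # R2"] by auto
  have "twin_paths W E x A' B' (f # R2) z"
    unfolding twin_paths_def
  proof (intro conjI)
    show "hd A' = x" "hd B' = x"
      using hB hA A dB unfolding A'_def B'_def by (auto simp: hd_append dpath_def)
    show "set A' \<inter> set B' = {x, hd (f # R2)}"
      using AB' ABR' br(2) A R Rt distR qA1 t(2) xA1 xB unfolding A'_def B'_def by auto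
    show "(set A' \<union> set B') \<inter> set (f # R2) = {hd (f # R2)}"
      using ABR' br(2) A R Rt distR unfolding A'_def B'_def by auto
    show "hd (f # R2) \<noteq> x"
      using fAB xA1 A by auto
  qed (use A' B' R' in auto)
  moreover have "length (f # R2) < length R" using R Rt by simp
  ultimately show ?thesis by blast
qed

lemma bireach_if_twin_paths:
  assumes bypass: "\<And>s. s \<in> W \<Longrightarrow> s \<noteq> x \<Longrightarrow> s \<noteq> z \<Longrightarrow>
                    \<exists>Q. dpath W E Q \<and> hd Q = x \<and> last Q = z \<and> s \<notin> set Q"
  shows "twin_paths W E x A B R z \<Longrightarrow> bireach W E x z"
proof (induction "length R" arbitrary: A B R rule: less_induct)
  case less
  show ?case
  proof (cases "hd R = z")
    case True
    with less.prems show ?thesis by (rule twin_paths_bireach)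
  next
    case False
    have "hd R \<in> W" "hd R \<noteq> x"
      using less.prems dpath_hd_in unfolding twin_paths_def dpath_def by blast+
    then obtain Q where "dpath W E Q" "hd Q = x" "last Q = z" "hd R \<notin> set Q"
      using bypass False by blast
    then obtain t Br f where t: "t \<in> set A \<union> set B" "t \<noteq> hd R" and f: "f \<in> set (tl R)"
      and br: "dpath W E (t # Br @ [f])" "set Br \<inter> (set A \<union> set B \<union> set R) = {}"
      using twin_paths_bridge[OF less.prems] by blast
    have "\<exists>A' B' R'. twin_paths W E x A' B' R' z \<and> length R' < length R"
    proof (cases "t \<in> set A")
      case True
      with twin_paths_step[OF less.prems _ t(2) f br] show ?thesis by blast
    next
      case False
      with t have "t \<in> set B" by blast
      moreover have "set Br \<inter> (set B \<union> set A \<union> set R) = {}" using br(2) by blast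
      ultimately show ?thesis
        using twin_paths_step[OF twin_paths_swap[OF less.prems] _ t(2) f br(1)] by blast
    qed
    with less.hyps show ?thesis by blast
  qed
qed

lemma bireach_if_no_cut_vertex:
  assumes P: "dpath W E P" "hd P = x" "last P = z" "x \<noteq> z"
    and bypass: "\<And>s. s \<in> W \<Longrightarrow> s \<noteq> x \<Longrightarrow> s \<noteq> z \<Longrightarrow>
                   \<exists>Q. dpath W E Q \<and> hd Q = x \<and> last Q = z \<and> s \<notin> set Q"
  shows "bireach W E x z"
proof -
  obtain R where PR: "P = x # R" "R \<noteq> []"
    using P by (cases P) (auto simp: dpath_def split: if_splits)
  then have "dpath W E R" "x \<notin> set R" "(x, hd R) \<in> E" "x \<in> W"
    using P(1) by (auto simp: dpath_Cons)
  moreover have "hd R \<in> W" using \<open>dpath W E R\<close> dpath_hd_in by (auto simp: dpath_def)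
  ultimately have "twin_paths W E x [x, hd R] [x, hd R] R z"
    using PR P(3) by (auto simp: twin_paths_def dpath_Cons dpath_singleton)
  with bypass show ?thesis by (rule bireach_if_twin_paths)
qed

section \<open>The last vertex of a path in the diblock\<close>

abbreviation last_visit :: "'a set \<Rightarrow> 'a list \<Rightarrow> 'a" where
  "last_visit B Q \<equiv> last (filter (\<lambda>u. u \<in> B) Q)"

lemma last_visit_append_Cons: "y \<in> B \<Longrightarrow> \<forall>w\<in>set post. w \<notin> B \<Longrightarrow> last_visit B (pre @ y # post) = y"
  by (simp add: filter_empty_conv)

lemma last_visit_decomp:
  assumes "x \<in> set Q" "x \<in> B"
  obtains pre y post where "Q = pre @ y # post" "y \<in> B" "\<forall>w\<in>set post. w \<notin> B"
    "last_visit B Q = y"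
proof -
  obtain pre y post where "Q = pre @ y # post" "y \<in> B" "\<forall>w\<in>set post. w \<notin> B"
    using split_list_last_prop[of Q "\<lambda>w. w \<in> B"] assms by blast
  with last_visit_append_Cons[of y B post pre] that show ?thesis by simp
qed

lemma root_in_diblock: "x \<in> diblock W E x"
  unfolding diblock_def by simp

lemma diblock_subset: "x \<in> W \<Longrightarrow> diblock W E x \<subseteq> W"
  unfolding diblock_def by auto

lemma Xset_subset: "Xset W E x y \<subseteq> W"
  unfolding Xset_def by auto

lemma branch_subset: "x \<in> W \<Longrightarrow> bottleneck W E x y \<Longrightarrow> Xset W E x y \<union> {y} \<subseteq> W"
  using Xset_subset[of W E x y] diblock_subset[of x W E] unfolding bottleneck_def by auto

lemma path_to_diblock_avoiding:
  assumes "y \<in> diblock W E x" "s \<noteq> x" "s \<noteq> y" "x \<in> W"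
  shows "\<exists>A. dpath W E A \<and> hd A = x \<and> last A = y \<and> s \<notin> set A"
proof -
  consider "bireach W E x y" | "y = x" | "y \<noteq> x" "y \<in> W" "(x, y) \<in> E"
    using assms(1) unfolding diblock_def by blast
  then show ?thesis
  proof cases
    case 1
    with assms(2,3) show ?thesis unfolding bireach_def by blast
  next
    case 2
    with assms show ?thesis by (intro exI[of _ "[x]"]) (auto simp: dpath_singleton)
  next
    case 3
    with assms show ?thesis by (intro exI[of _ "[x, y]"]) (auto simp: dpath_def less_Suc_eq)
  qed
qed

lemma cut_vertex_outside_diblock:
  assumes "dpath W E Q" "hd Q = x" "last Q = u" "u \<notin> diblock W E x"
  obtains s where "s \<in> W" "s \<noteq> x" "s \<noteq> u"
    "\<And>Q'. dpath W E Q' \<Longrightarrow> hd Q' = x \<Longrightarrow> last Q' = u \<Longrightarrow> s \<in> set Q'"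
proof -
  have "u \<in> W" using assms(1,3) dpath_last_in by (fastforce simp: dpath_def)
  with assms(4) have "u \<noteq> x" "\<not> bireach W E x u" unfolding diblock_def by auto
  with assms(1-3) bireach_if_no_cut_vertex[of W E Q x u] that show ?thesis by metis
qed

text \<open>Since y lies in the diblock, x reaches y avoiding s; so s lies on the way from y to u.\<close>

lemma cut_vertex_after_diblock:
  assumes x: "x \<in> W" and y: "y \<in> diblock W E x" and s: "s \<noteq> x"
    and cut: "\<And>Q. dpath W E Q \<Longrightarrow> hd Q = x \<Longrightarrow> last Q = u \<Longrightarrow> s \<in> set Q"
    and yt: "dpath W E (y # t)" "last (y # t) = u"
  shows "s \<in> set (y # t)"
proof (rule ccontr)
  assume s_yt: "s \<notin> set (y # t)"
  then obtain A where A: "dpath W E A" "hd A = x" "last A = y" "s \<notin> set A"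
    using path_to_diblock_avoiding[OF y s _ x] by auto
  have "A \<noteq> []" using A(1) by (simp add: dpath_def)
  have "successively (\<lambda>a b. (a, b) \<in> E) (A @ t)"
    using A(1,3) yt(1) \<open>A \<noteq> []\<close>
    by (cases t) (auto simp: dpath_iff_successively successively_append_iff successively_Cons)
  moreover have "set (A @ t) \<subseteq> W" using A(1) yt(1) by (auto simp: dpath_def)
  moreover have "hd (A @ t) = x" "last (A @ t) = u" using A yt(2) \<open>A \<noteq> []\<close> by (cases t; simp)+
  ultimately obtain Q where "dpath W E Q" "hd Q = x" "last Q = u" "set Q \<subseteq> set (A @ t)"
    using walk_to_path[of "A @ t" W E] \<open>A \<noteq> []\<close> by auto
  with cut A(4) s_yt show False by auto
qed

lemma last_visit_truncate:
  assumes Q: "dpath W E Q" "Q = pre @ y # post" "y \<in> B" "\<forall>w\<in>set post. w \<notin> B"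
    and s: "s \<in> set post" "last Q \<noteq> s"
  obtains Q' where "dpath W E Q'" "hd Q' = hd Q" "last Q' = s" "length Q' < length Q"
    "last_visit B Q' = y"
proof -
  obtain a b where post: "post = a @ s # b" using s(1) split_list by metis
  with Q(2) s(2) have "b \<noteq> []" by auto
  let ?Q' = "pre @ y # a @ [s]"
  have "dpath W E ?Q'" using Q(1,2) post dpath_appendD1[of W E ?Q' b] by simp
  moreover have "hd ?Q' = hd Q" using Q(2) by (cases pre) simp_all
  moreover have "length ?Q' < length Q" using Q(2) post \<open>b \<noteq> []\<close> by simp
  moreover have "last_visit B ?Q' = y"
    using last_visit_append_Cons[of y B "a @ [s]" pre] Q(3,4) post by simp
  ultimately show ?thesis using that by simp
qed

text \<open>A cut vertex separating u from x lies behind both exits, so truncating both paths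
  there gives a shorter counterexample.\<close>

lemma last_visit_diblock_unique:
  assumes x: "x \<in> W"
  shows "dpath W E Q1 \<Longrightarrow> hd Q1 = x \<Longrightarrow> last Q1 = u \<Longrightarrow>
    dpath W E Q2 \<Longrightarrow> hd Q2 = x \<Longrightarrow> last Q2 = u \<Longrightarrow> u \<notin> diblock W E x \<Longrightarrow>
    last_visit (diblock W E x) Q1 = last_visit (diblock W E x) Q2"
proof (induction "length Q1" arbitrary: Q1 Q2 u rule: less_induct)
  case less
  define B where "B = diblock W E x"
  have xB: "x \<in> B" unfolding B_def by (rule root_in_diblock)
  obtain s where s: "s \<in> W" "s \<noteq> x" "s \<noteq> u"
    and cut: "\<And>Q. dpath W E Q \<Longrightarrow> hd Q = x \<Longrightarrow> last Q = u \<Longrightarrow> s \<in> set Q"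
    by (erule cut_vertex_outside_diblock[OF less.prems(1-3,7)])
  have "x \<in> set Q1" "x \<in> set Q2"
    using dpath_hd_in[OF less.prems(1)] dpath_hd_in[OF less.prems(4)] less.prems(2,5) by simp_all
  obtain pre1 y1 post1 where Q1: "Q1 = pre1 @ y1 # post1" "y1 \<in> B" "\<forall>w\<in>set post1. w \<notin> B"
    and y1: "last_visit B Q1 = y1"
    by (rule last_visit_decomp[OF \<open>x \<in> set Q1\<close> xB])
  obtain pre2 y2 post2 where Q2: "Q2 = pre2 @ y2 # post2" "y2 \<in> B" "\<forall>w\<in>set post2. w \<notin> B"
    and y2: "last_visit B Q2 = y2"
    by (rule last_visit_decomp[OF \<open>x \<in> set Q2\<close> xB])
  show ?case unfolding B_def[symmetric] y1 y2
  proof (rule ccontr)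
    assume ne: "y1 \<noteq> y2"
    have "dpath W E (y1 # post1)" "last (y1 # post1) = u"
      using Q1(1) less.prems(1,3) dpath_appendD2[of W E pre1] by (metis list.discI, metis last_appendR list.discI)
    with Q1(2) cut have "s \<in> set (y1 # post1)"
      unfolding B_def by (rule cut_vertex_after_diblock[OF x _ s(2)])
    moreover have "dpath W E (y2 # post2)" "last (y2 # post2) = u"
      using Q2(1) less.prems(4,6) dpath_appendD2[of W E pre2] by (metis list.discI, metis last_appendR list.discI)
    with Q2(2) cut have "s \<in> set (y2 # post2)"
      unfolding B_def by (rule cut_vertex_after_diblock[OF x _ s(2)])
    ultimately have "s \<in> set post1" "s \<in> set post2" "s \<notin> B" using ne Q1(2,3) Q2(2,3) by auto
    obtain Q1' where "dpath W E Q1'" "hd Q1' = x" "last Q1' = s" "length Q1' < length Q1"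
      "last_visit B Q1' = y1"
      by (rule last_visit_truncate[OF less.prems(1) Q1 \<open>s \<in> set post1\<close>])
        (use less.prems s(3) in simp_all)
    moreover obtain Q2' where "dpath W E Q2'" "hd Q2' = x" "last Q2' = s" "last_visit B Q2' = y2"
      by (rule last_visit_truncate[OF less.prems(4) Q2 \<open>s \<in> set post2\<close>])
        (use less.prems s(3) in simp_all)
    ultimately show False using less.hyps \<open>s \<notin> B\<close> ne unfolding B_def by metis
  qed
qed

lemma last_visit_diblock_neq_root:
  assumes "u \<notin> diblock W E x" "dpath W E Q" "hd Q = x" "last Q = u"
  shows "last_visit (diblock W E x) Q \<noteq> x"
proof -
  define B where "B = diblock W E x"
  obtain Q' where Q: "Q = x # Q'" using assms(2,3) by (cases Q) (auto simp: dpath_def)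
  have "Q' \<noteq> []" using Q assms(1,4) root_in_diblock[of x W E] by auto
  then have "dpath W E Q'" "x \<notin> set Q'" "(x, hd Q') \<in> E" using assms(2) Q by (auto simp: dpath_Cons)
  moreover have "hd Q' \<in> set Q'" using \<open>Q' \<noteq> []\<close> by simp
  moreover from calculation have "hd Q' \<in> W" by (auto simp: dpath_def)
  ultimately have "hd Q' \<in> set (filter (\<lambda>w. w \<in> B) Q')" by (simp add: B_def diblock_def)
  then have "filter (\<lambda>w. w \<in> B) Q' \<noteq> []" by (metis empty_iff empty_set)
  then have "last_visit B Q = last_visit B Q'" "last_visit B Q' \<in> set Q'"
    using Q last_in_set by fastforce+
  with \<open>x \<notin> set Q'\<close> show ?thesis unfolding B_def by auto
qed

section \<open>Branches of a diblock\<close>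

definition rooted :: "'a set \<Rightarrow> 'a rel \<Rightarrow> 'a \<Rightarrow> bool" where
  "rooted W E x \<longleftrightarrow> x \<in> W \<and> (\<forall>u\<in>W. \<exists>Q. dpath W E Q \<and> hd Q = x \<and> last Q = u)"

lemma Xset_last_visit:
  assumes "x \<in> W" "u \<in> W" "u \<notin> diblock W E x" "dpath W E Q" "hd Q = x" "last Q = u"
  shows "u \<in> Xset W E x (last_visit (diblock W E x) Q)"
proof -
  have "\<forall>P. dpath W E P \<and> hd P = x \<and> last P = u \<longrightarrow>
      last_visit (diblock W E x) P = last_visit (diblock W E x) Q"
    using last_visit_diblock_unique[OF assms(1) _ _ _ assms(4-6,3)] by blast
  with assms(2,3) show ?thesis unfolding Xset_def by simp
qed

lemma bottleneck_last_visit: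
  assumes "x \<in> W" "u \<in> W" "u \<notin> diblock W E x" "dpath W E Q" "hd Q = x" "last Q = u"
  shows "bottleneck W E x (last_visit (diblock W E x) Q)"
proof -
  have "x \<in> set Q" using assms(4,5) dpath_hd_in by metis
  then obtain y where "y \<in> diblock W E x" "last_visit (diblock W E x) Q = y"
    using last_visit_decomp[OF _ root_in_diblock] by metis
  then show ?thesis
    using Xset_last_visit[OF assms] last_visit_diblock_neq_root[OF assms(3-6)]
    unfolding bottleneck_def by auto
qed

lemma Xset_after_last_visit:
  assumes rt: "rooted W E x" and Q: "dpath W E Q" "hd Q = x"
    and dec: "Q = pre @ y # post" "y \<in> diblock W E x" "\<forall>w\<in>set post. w \<notin> diblock W E x"
  shows "set post \<subseteq> Xset W E x y"
proof
  fix w assume "w \<in> set post"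
  then obtain a b where post: "post = a @ w # b" using split_list by metis
  let ?Qw = "pre @ y # a @ [w]"
  have "dpath W E ?Qw" using Q(1) dec(1) post dpath_appendD1[of W E ?Qw b] by simp
  moreover have "hd ?Qw = x" using Q(2) dec(1) by (cases pre) auto
  moreover have "w \<in> W" "w \<notin> diblock W E x"
    using \<open>w \<in> set post\<close> Q(1) dec by (auto simp: dpath_def)
  moreover have "last_visit (diblock W E x) ?Qw = y"
    using last_visit_append_Cons[of y _ "a @ [w]" pre] dec post by simp
  ultimately show "w \<in> Xset W E x y"
    using Xset_last_visit[of x W w E ?Qw] rt unfolding rooted_def by simp
qed

lemma rooted_branch:
  assumes rt: "rooted W E x" and bn: "bottleneck W E x y"
  shows "rooted (Xset W E x y \<union> {y}) E y"
proof -
  define B where "B = diblock W E x"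
  have xW: "x \<in> W" using rt unfolding rooted_def by simp
  have yB: "y \<in> B" unfolding B_def using bn by (simp add: bottleneck_def)
  have "\<exists>Q. dpath (Xset W E x y \<union> {y}) E Q \<and> hd Q = y \<and> last Q = u"
    if "u \<in> Xset W E x y" for u
  proof -
    have uW: "u \<in> W" "u \<notin> B" using that unfolding Xset_def B_def by auto
    obtain Q where Q: "dpath W E Q" "hd Q = x" "last Q = u" using rt uW(1) unfolding rooted_def by blast
    have "x \<in> set Q" using Q dpath_hd_in by metis
    then obtain pre y' post where dec: "Q = pre @ y' # post" "y' \<in> B" "\<forall>w\<in>set post. w \<notin> B"
      and "last_visit B Q = y'"
      using last_visit_decomp[of x Q B] root_in_diblock B_def by metis
    moreover have "last_visit B Q = y" using that Q unfolding Xset_def B_def by blast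
    ultimately have dec: "Q = pre @ y # post" "\<forall>w\<in>set post. w \<notin> B" using dec by auto
    have "dpath W E (y # post)" using Q(1) dec(1) dpath_appendD2[of W E pre "y # post"] by simp
    moreover have "set post \<subseteq> Xset W E x y"
      using Xset_after_last_visit[OF rt Q(1,2) dec(1)] yB dec(2) B_def by blast
    then have "set (y # post) \<subseteq> Xset W E x y \<union> {y}" by auto
    ultimately have "dpath (Xset W E x y \<union> {y}) E (y # post)" by (rule dpath_mono)
    moreover have "last (y # post) = u" using Q(3) dec(1) by simp
    ultimately show ?thesis by auto
  qed
  moreover have "y \<in> W" using yB diblock_subset[OF xW] B_def by blast
  ultimately show ?thesis unfolding rooted_def by (auto intro: dpath_singleton)
qed

lemma path_through_bottleneck:
  assumes rt: "rooted W E x" and bn: "bottleneck W E x y"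
    and Q: "dpath W E Q" "hd Q = x" "last Q \<in> Xset W E x y \<union> {y}"
  obtains pre post where "Q = pre @ y # post" "pre \<noteq> []" "set post \<subseteq> Xset W E x y"
    "set pre \<subseteq> diblock W E x \<union> \<Union>{Xset W E x y' | y'. y' \<noteq> y \<and> bottleneck W E x y'}"
proof -
  define B where "B = diblock W E x"
  have xW: "x \<in> W" using rt unfolding rooted_def by simp
  have yB: "y \<in> B" "y \<noteq> x" using bn unfolding bottleneck_def B_def by auto
  have xB: "x \<in> B" unfolding B_def by (rule root_in_diblock)
  obtain pre post where dec: "Q = pre @ y # post" "\<forall>w\<in>set post. w \<notin> B"
  proof (cases "last Q = y")
    case True
    moreover have "Q \<noteq> []" using Q(1) by (simp add: dpath_def)
    ultimately have "Q = butlast Q @ y # []" by (metis append_butlast_last_id)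
    then show ?thesis using that by simp
  next
    case False
    then have "\<forall>P. dpath W E P \<and> hd P = x \<and> last P = last Q \<longrightarrow> last_visit B P = y"
      using Q(3) unfolding Xset_def B_def by simp
    then have "last_visit B Q = y" using Q(1,2) by blast
    moreover have "x \<in> set Q" using Q(1,2) dpath_hd_in by metis
    ultimately show ?thesis using last_visit_decomp[OF _ xB] that by metis
  qed
  have "pre \<noteq> []" using dec(1) Q(2) yB(2) by auto
  moreover have "set post \<subseteq> Xset W E x y"
    using Xset_after_last_visit[OF rt Q(1,2) dec(1)] yB(1) dec(2) B_def by blast
  moreover have "w \<in> B \<union> \<Union>{Xset W E x y' | y'. y' \<noteq> y \<and> bottleneck W E x y'}"
    if "w \<in> set pre" for w
  proof (cases "w \<in> B")
    case False
    obtain a b where pre: "pre = a @ w # b" using \<open>w \<in> set pre\<close> split_list by metis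
    let ?Qw = "a @ [w]"
    have dQw: "dpath W E ?Qw" using Q(1) dec(1) pre dpath_appendD1[of W E ?Qw] by simp
    have hQw: "hd ?Qw = x" using Q(2) dec(1) pre by (cases a) auto
    have wW: "w \<in> W" using dQw by (auto simp: dpath_def)
    define y' where "y' = last_visit B ?Qw"
    have "bottleneck W E x y'" "w \<in> Xset W E x y'"
      using bottleneck_last_visit[OF xW wW _ dQw hQw] Xset_last_visit[OF xW wW _ dQw hQw] False
      unfolding y'_def B_def by auto
    moreover have "y' \<noteq> y"
    proof -
      have "x \<in> set ?Qw" using dQw hQw dpath_hd_in by metis
      then have "y' \<in> set ?Qw"
        using last_visit_decomp[OF _ xB] unfolding y'_def by (metis in_set_conv_decomp)
      moreover have "y \<notin> set ?Qw" using Q(1) dec(1) pre by (auto simp: dpath_def)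
      ultimately show ?thesis by blast
    qed
    ultimately show ?thesis by blast
  qed simp
  ultimately show ?thesis using that dec(1) unfolding B_def by blast
qed

section \<open>The cut decomposition\<close>

lemma cdnode_rooted:
  assumes "cdnode V E r q U" "rooted V E r"
  shows "rooted U E (last q) \<and> U \<subseteq> V"
  using assms
proof (induction rule: cdnode.induct)
  case root
  then show ?case by simp
next
  case (child p W x)
  then have rt: "rooted W E (last p)" and "W \<subseteq> V" by simp_all
  then have "last p \<in> W" by (simp add: rooted_def)
  with rt \<open>W \<subseteq> V\<close> show ?case
    using rooted_branch[OF rt child.hyps(2)] branch_subset[OF _ child.hyps(2)] by auto
qed

text \<open>Induction on the size of the subgraph, which loses its root at each child.\<close>

lemma cdnode_covers:
  assumes rV: "rooted V E r" and fin: "finite V"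
  shows "cdnode V E r q U \<Longrightarrow> u \<in> U \<Longrightarrow>
    \<exists>q' U'. cdnode V E r q' U' \<and> prefix q q' \<and> u \<in> diblock U' E (last q')"
proof (induction "card U" arbitrary: q U rule: less_induct)
  case less
  define x where "x = last q"
  have rt: "rooted U E x" and UV: "U \<subseteq> V" using cdnode_rooted[OF less.prems(1) rV] x_def by auto
  show ?case
  proof (cases "u \<in> diblock U E x")
    case True
    with less.prems(1) show ?thesis unfolding x_def by blast
  next
    case False
    have xU: "x \<in> U" using rt unfolding rooted_def by simp
    obtain Q where Q: "dpath U E Q" "hd Q = x" "last Q = u"
      using rt less.prems(2) unfolding rooted_def by blast
    define y where "y = last_visit (diblock U E x) Q"
    have bn: "bottleneck U E x y" and uX: "u \<in> Xset U E x y"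
      using bottleneck_last_visit[OF xU less.prems(2) False Q] Xset_last_visit[OF xU less.prems(2) False Q]
      unfolding y_def by auto
    have cd: "cdnode V E r (q @ [y]) (Xset U E x y \<union> {y})"
      using cdnode.child[OF less.prems(1)] bn unfolding x_def by blast
    have "x \<notin> Xset U E x y" unfolding Xset_def using root_in_diblock by fast
    moreover have "y \<noteq> x" using bn unfolding bottleneck_def by simp
    ultimately have "Xset U E x y \<union> {y} \<subseteq> U" "Xset U E x y \<union> {y} \<noteq> U"
      using branch_subset[OF xU bn] xU by blast+
    then have "Xset U E x y \<union> {y} \<subset> U" by (rule psubsetI)
    moreover have "finite U" using UV fin finite_subset by blast
    ultimately have "card (Xset U E x y \<union> {y}) < card U" by (rule psubset_card_mono[rotated])
    then obtain q' U' where "cdnode V E r q' U'" "prefix (q @ [y]) q'" "u \<in> diblock U' E (last q')"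
      using less.hyps[OF _ cd] uX by blast
    moreover from \<open>prefix (q @ [y]) q'\<close> have "prefix q q'"
      by (rule prefix_order.trans[rotated]) simp
    ultimately show ?thesis by blast
  qed
qed

lemma finbags_append_singleton:
  "Suc (Suc i) \<le> length p \<Longrightarrow> finbags V E r (p @ [y]) i = finbags V E r p i"
  unfolding finbags_def by simp

lemma finbags_last_fin:
  assumes rV: "rooted V E r" and fin: "finite V" and cd: "cdnode V E r p W"
    and w: "w \<in> diblock W E (last p) \<union>
            \<Union>{Xset W E (last p) y' | y'. y' \<noteq> y \<and> bottleneck W E (last p) y'}"
  shows "w \<in> finbags V E r (p @ [y]) (length p - 1)"
proof -
  have "p \<noteq> []" using cd by (cases rule: cdnode.cases) auto
  then have take: "take (Suc (length p - 1)) (p @ [y]) = p"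
    "take (Suc (Suc (length p - 1))) (p @ [y]) = p @ [y]" by simp_all
  have "\<exists>q U. cdnode V E r q U \<and> prefix p q \<and> \<not> prefix (p @ [y]) q \<and> w \<in> diblock U E (last q)"
    using w
  proof
    assume "w \<in> diblock W E (last p)"
    with cd show ?thesis by (intro exI[of _ p] exI[of _ W]) simp
  next
    assume "w \<in> \<Union>{Xset W E (last p) y' | y'. y' \<noteq> y \<and> bottleneck W E (last p) y'}"
    then obtain y' where y': "y' \<noteq> y" "bottleneck W E (last p) y'" "w \<in> Xset W E (last p) y'"
      by blast
    from cdnode.child[OF cd y'(2)] obtain q U where
      q: "cdnode V E r q U" "prefix (p @ [y']) q" "w \<in> diblock U E (last q)"
      using cdnode_covers[OF rV fin] y'(3) by blast
    then have "prefix p q" using prefix_order.trans[of p "p @ [y']" q] by simp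
    moreover have "\<not> prefix (p @ [y]) q"
      using q(2) y'(1) prefix_same_cases[of "p @ [y]" q "p @ [y']"] by auto
    ultimately show ?thesis using q(1,3) by blast
  qed
  then show ?thesis unfolding finbags_def cdbag_def take by blast
qed

lemma cdnode_path_suffix:
  assumes rV: "rooted V E r"
  shows "cdnode V E r p W \<Longrightarrow> dpath V E P \<Longrightarrow> hd P = r \<Longrightarrow> last P \<in> W \<Longrightarrow>
    \<exists>pre suf. P = pre @ suf \<and> suf \<noteq> [] \<and> hd suf = last p \<and> set suf \<subseteq> W"
proof (induction arbitrary: P rule: cdnode.induct)
  case root
  then show ?case by (intro exI[of _ "[]"] exI[of _ P]) (auto simp: dpath_def)
next
  case (child p W y)
  have rt: "rooted W E (last p)" using cdnode_rooted[OF child.hyps(1) rV] by blast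
  have "last P \<in> W"
    using child.prems(3) branch_subset[OF _ child.hyps(2)] rt unfolding rooted_def by blast
  then obtain pre suf where P: "P = pre @ suf" "suf \<noteq> []" "hd suf = last p" "set suf \<subseteq> W"
    using child.IH[OF child.prems(1,2)] by blast
  have "dpath W E suf" using child.prems(1) P dpath_appendD2 dpath_mono by metis
  moreover have "last suf \<in> Xset W E (last p) y \<union> {y}" using P(1,2) child.prems(3) by simp
  ultimately obtain s1 s2 where "suf = s1 @ y # s2" "set s2 \<subseteq> Xset W E (last p) y"
    by (rule path_through_bottleneck[OF rt child.hyps(2) _ P(3)])
  with P(1) show ?case by (intro exI[of _ "pre @ s1"] exI[of _ "y # s2"]) auto
qed

lemma cdnode_path_segments:
  assumes rV: "rooted V E r" and fin: "finite V"
  shows "cdnode V E r p W \<Longrightarrow> dpath V E P \<Longrightarrow> hd P = r \<Longrightarrow> last P \<in> W \<Longrightarrow>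
    Suc i < length p \<Longrightarrow>
    \<exists>pre seg post. P = pre @ seg @ p ! Suc i # post \<and> seg \<noteq> [] \<and> hd seg = p ! i \<and>
      set seg \<subseteq> finbags V E r p i"
proof (induction arbitrary: P rule: cdnode.induct)
  case root
  then show ?case by simp
next
  case (child p W y)
  have rt: "rooted W E (last p)" using cdnode_rooted[OF child.hyps(1) rV] by blast
  have "last P \<in> W"
    using child.prems(3) branch_subset[OF _ child.hyps(2)] rt unfolding rooted_def by blast
  show ?case
  proof (cases "Suc i < length p")
    case True
    then show ?thesis
      using child.IH[OF child.prems(1,2) \<open>last P \<in> W\<close> True]
      by (simp add: nth_append finbags_append_singleton)
  next
    case False
    with child.prems(4) have i: "i = length p - 1" "Suc i = length p" by simp_all
    obtain pre suf where P: "P = pre @ suf" "suf \<noteq> []" "hd suf = last p" "set suf \<subseteq> W"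
      using cdnode_path_suffix[OF rV child.hyps(1) child.prems(1,2) \<open>last P \<in> W\<close>] by blast
    have "dpath W E suf" using child.prems(1) P dpath_appendD2 dpath_mono by metis
    moreover have "last suf \<in> Xset W E (last p) y \<union> {y}" using P(1,2) child.prems(3) by simp
    ultimately obtain s1 s2 where s: "suf = s1 @ y # s2" "s1 \<noteq> []" "set s2 \<subseteq> Xset W E (last p) y"
      "set s1 \<subseteq> diblock W E (last p) \<union>
         \<Union>{Xset W E (last p) y' | y'. y' \<noteq> y \<and> bottleneck W E (last p) y'}"
      by (rule path_through_bottleneck[OF rt child.hyps(2) _ P(3)])
    have "set s1 \<subseteq> finbags V E r (p @ [y]) i"
    proof
      fix w assume "w \<in> set s1"
      with s(4) have "w \<in> diblock W E (last p) \<union>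
          \<Union>{Xset W E (last p) y' | y'. y' \<noteq> y \<and> bottleneck W E (last p) y'}" by (rule subsetD)
      then show "w \<in> finbags V E r (p @ [y]) i" unfolding i(1) by (rule finbags_last_fin[OF rV fin child.hyps(1)])
    qed
    moreover have "p \<noteq> []" using i(2) by auto
    then have "hd s1 = (p @ [y]) ! i" using P(3) s(1,2) i by (simp add: nth_append last_conv_nth)
    moreover have "(p @ [y]) ! Suc i = y" using i(2) by simp
    ultimately show ?thesis using P(1) s(1,2) by (intro exI[of _ pre] exI[of _ s1] exI[of _ s2]) simp
  qed
qed

lemma nth_segment_witness:
  assumes "P = pre @ seg @ y # post" "seg \<noteq> []"
  shows "\<exists>a b. a < b \<and> b < length P \<and> P ! a = hd seg \<and> P ! b = y \<and>
           (\<forall>k. a \<le> k \<and> k < b \<longrightarrow> P ! k \<in> set seg)"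
proof (intro exI conjI allI impI)
  let ?a = "length pre" and ?b = "length pre + length seg"
  show "?a < ?b" "?b < length P" using assms by simp_all
  show "P ! ?a = hd seg" "P ! ?b = y" using assms by (simp_all add: nth_append hd_conv_nth)
  fix k assume "?a \<le> k \<and> k < ?b"
  then show "P ! k \<in> set seg" using assms by (auto simp: nth_append)
qed

theorem lemma10:
  fixes V :: "'a set" and E :: "'a rel" and r v :: 'a and p P :: "'a list" and W :: "'a set"
  assumes "finite V" and "E \<subseteq> V \<times> V" and "\<forall>u. (u, u) \<notin> E"
    and "card V \<ge> 2" and "r \<in> V"
    and "\<forall>w\<in>V. \<exists>Q. dpath V E Q \<and> hd Q = r \<and> last Q = w"
    and "cdnode V E r p W"
    and "dpath V E P" and "hd P = r" and "last P = v" and "v \<in> cdbag V E r p"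
  shows "\<forall>i. Suc i < length p \<longrightarrow>
           (\<exists>a b. a < b \<and> b < length P \<and> P ! a = p ! i \<and> P ! b = p ! Suc i \<and>
              (\<forall>k. a \<le> k \<and> k < b \<longrightarrow> P ! k \<in> finbags V E r p i))"
proof (intro allI impI)
  fix i assume i: "Suc i < length p"
  have rV: "rooted V E r" unfolding rooted_def using assms(5,6) by simp
  obtain U where U: "cdnode V E r p U" "v \<in> diblock U E (last p)"
    using assms(11) unfolding cdbag_def by blast
  have "last p \<in> U" using cdnode_rooted[OF U(1) rV] unfolding rooted_def by simp
  then have "last P \<in> U" using U(2) assms(10) diblock_subset[of "last p" U E] by auto
  then obtain pre seg post where seg: "P = pre @ seg @ p ! Suc i # post" "seg \<noteq> []"
    "hd seg = p ! i" "set seg \<subseteq> finbags V E r p i"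
    using cdnode_path_segments[OF rV assms(1) U(1) assms(8,9) _ i] by blast
  obtain a b where ab: "a < b" "b < length P" "P ! a = hd seg" "P ! b = p ! Suc i"
    and between: "\<forall>k. a \<le> k \<and> k < b \<longrightarrow> P ! k \<in> set seg"
    using nth_segment_witness[OF seg(1,2)] by blast
  have "\<forall>k. a \<le> k \<and> k < b \<longrightarrow> P ! k \<in> finbags V E r p i" using between seg(4) by blast
  with ab seg(3) show "\<exists>a b. a < b \<and> b < length P \<and> P ! a = p ! i \<and> P ! b = p ! Suc i \<and>
              (\<forall>k. a \<le> k \<and> k < b \<longrightarrow> P ! k \<in> finbags V E r p i)"
    by auto
qed

end
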